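(* There exists a universal constant $c_4>0$ such that the following holds. Fix $s>0$ and $\delta\in(0,\delta_0)$. For every integer $n\ge1$, every partition $\lambda=1^{n_1}2^{n_2}\cdots$ of $n$, and every integer $a$ with $a\ge\delta n^{5/4}\ge e^{c_1}n$, \[ e^{-c_4n^2/a^2}\le\prod_{i\ge2}\mathsf K_{a,i}\le e^{c_4n^2/a^2}. \]
   Context: For integers $a,i\ge1$ let $f_{a,i}=\frac1{2i}\sum_{d\mid i,\ d\text{ odd}}\mu(d)(2a)^{i/d}$ ($\mu$ the Möbius function; sum over positive odd divisors of $i$), a positive integer, and define $g_{a,i}$ by $f_{a,i}=\frac{(2a)^i}{2i}g_{a,i}$. Let $c_1>0$ be a fixed constant such that $e^{-c_1(2a)^{-2i/3}}\le g_{a,i}\le e^{c_1(2a)^{-2i/3}}$ for all $a,i\ge1$ (e.g. $c_1=4$). For $s>0$ and $n\ge1$ let $t_n\in(0,1)$ be the unique solution in $(0,1)$ of $\frac{4t}{(1+t)^2}=e^{-s/\sqrt n}$, and $\delta_0=\left[\sup_{n\ge1}\left(n^{1/4}\log(1/t_n)e^{(c_1/4)+1}\right)\right]^{-1}$. Given a partition $\lambda$ of $n$ with $n_i$ parts of size $i$, let \[ \mathsf K_{a,i}=\sum_{\nu=0}^{n_i}\frac1{2^{n_i}}\binom{n_i}{\nu}\frac{(f_{a,i}-\nu+n_i-1)!}{(f_{a,i}-\nu)!\,f_{a,i}^{\,n_i-1}}, \] equivalently $\mathsf K_{a,i}=\frac{n_i!}{(2f_{a,i})^{n_i}}[x^{n_i}]\left(\frac{1+x}{1-x}\right)^{f_{a,i}}$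 (the ratio of factorials means $\prod_{k=1}^{n_i-1}(f_{a,i}-\nu+k)$ when $n_i\ge1$, and $\mathsf K_{a,i}=1$ when $n_i=0$). The product $\prod_{i\ge2}$ runs over $2\le i\le n$. *)

theory Defs
  imports "HOL-Analysis.Analysis" "HOL-Computational_Algebra.Squarefree"
begin

definition mu :: "nat \<Rightarrow> int" where
  "mu d = (if squarefree d then (-1) ^ card (prime_factors d) else 0)"

definition f_ai :: "nat \<Rightarrow> nat \<Rightarrow> real" where
  "f_ai a i = (\<Sum>d\<in>{d. d dvd i \<and> odd d}. real_of_int (mu d) * (2 * real a) ^ (i div d)) / (2 * real i)"

definition g_ai :: "nat \<Rightarrow> nat \<Rightarrow> real" where
  "g_ai a i = f_ai a i * (2 * real i) / (2 * real a) ^ i"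

definition t_n :: "real \<Rightarrow> nat \<Rightarrow> real" where
  "t_n s n = (THE t. 0 < t \<and> t < 1 \<and> 4 * t / (1 + t)^2 = exp (- s / sqrt (real n)))"

definition delta0 :: "real \<Rightarrow> real \<Rightarrow> real" where
  "delta0 c1 s = inverse (SUP n\<in>{n::nat. n \<ge> 1}.
      real n powr (1/4) * ln (1 / t_n s n) * exp (c1 / 4 + 1))"

text \<open>Partition of n given by multiplicities m i (number of parts of size i).\<close>
definition is_partition_mult :: "nat \<Rightarrow> (nat \<Rightarrow> nat) \<Rightarrow> bool" where
  "is_partition_mult n m \<longleftrightarrow> m 0 = 0 \<and> (\<forall>i>n. m i = 0) \<and> (\<Sum>i=1..n. i * m i) = n"

text \<open>K_{a,i} for multiplicity k = n_i; falling ratio of factorials written as a product.\<close>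
definition K_ai :: "nat \<Rightarrow> nat \<Rightarrow> nat \<Rightarrow> real" where
  "K_ai a i k = (if k = 0 then 1 else
     (\<Sum>\<nu>=0..k. (1 / 2 ^ k) * real (k choose \<nu>) *
        (\<Prod>j=1..k-1. f_ai a i - real \<nu> + real j) / (f_ai a i) ^ (k - 1)))"

end

theory Submission
  imports Defs
begin

(* With x_j = (j - \<nu>)/f, each summand of K is a binomial weight times
   \<Prod>_{j=1}^{k-1} (1 + x_j) = exp (\<Sum>x_j + O(\<Sum>x_j^2)).  The linear part
   \<Sum>_j x_j = v (k - 2\<nu>), v = (k-1)/(2f), is linear in \<nu>, so the binomial average of its
   exponential is cosh v ^ k, which lies in [1, exp (k v^2)].  Hence |ln K| <= 2k^3/f^2.
   The lower bound on g gives f_{a,i} >= (2a)^i/(2i e^c1), and with i n_i <= n every factor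
   i >= 2 contributes at most e^(2 c1) n/a^2 when a >= e^c1 n; the n - 1 factors give
   c4 = e^(2 c1). *)

lemma exp_diff_two_square_le_one_plus:
  fixes x :: real
  assumes "\<bar>x\<bar> \<le> 1/2"
  shows "exp (x - 2 * x^2) \<le> 1 + x"
proof -
  have "x - 2 * x^2 \<le> ln (1 + x)"
    using abs_ln_one_plus_x_minus_x_bound[OF assms] by linarith
  moreover have "1 + x > 0" using assms by linarith
  ultimately show ?thesis by (metis exp_le_cancel_iff exp_ln)
qed

lemma cosh_le_exp_square:
  fixes v :: real
  assumes "0 \<le> v" "v \<le> 1"
  shows "cosh v \<le> exp (v^2)"
proof -
  have "exp (-v) \<le> 1 / (1 + v)"
    using exp_ge_add_one_self[of v] assms by (simp add: exp_minus inverse_eq_divide frac_le)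
  also have "\<dots> \<le> 1 - v + v^2"
  proof -
    have "1 \<le> (1 - v + v^2) * (1 + v)"
      using assms by (simp add: algebra_simps power2_eq_square)
    then show ?thesis using assms by (simp add: divide_le_eq)
  qed
  finally have "cosh v \<le> 1 + v^2"
    using exp_bound[OF assms] by (simp add: cosh_field_def)
  also have "\<dots> \<le> exp (v^2)" by (rule exp_ge_add_one_self)
  finally show ?thesis .
qed

lemma prod_one_plus_between_exp:
  fixes x :: "'a \<Rightarrow> real"
  assumes "finite J" and small: "\<And>j. j \<in> J \<Longrightarrow> \<bar>x j\<bar> \<le> 1/2"
  shows "exp (sum x J - 2 * (\<Sum>j\<in>J. x j ^ 2)) \<le> (\<Prod>j\<in>J. 1 + x j)"
    and "(\<Prod>j\<in>J. 1 + x j) \<le> exp (sum x J)"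
proof -
  have "exp (sum x J - 2 * (\<Sum>j\<in>J. x j ^ 2)) = (\<Prod>j\<in>J. exp (x j - 2 * x j ^ 2))"
    using assms(1) by (simp add: exp_sum[symmetric] sum_subtractf sum_distrib_left)
  also have "\<dots> \<le> (\<Prod>j\<in>J. 1 + x j)"
    by (rule prod_mono) (use small exp_diff_two_square_le_one_plus in force)
  finally show "exp (sum x J - 2 * (\<Sum>j\<in>J. x j ^ 2)) \<le> (\<Prod>j\<in>J. 1 + x j)" .
  have "(\<Prod>j\<in>J. 1 + x j) \<le> (\<Prod>j\<in>J. exp (x j))"
  proof (rule prod_mono)
    fix j assume "j \<in> J"
    then show "0 \<le> 1 + x j \<and> 1 + x j \<le> exp (x j)"
      using small[of j] exp_ge_add_one_self[of "x j"] by (simp add: abs_le_iff add.commute)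
  qed
  also have "\<dots> = exp (sum x J)" using assms(1) by (simp add: exp_sum)
  finally show "(\<Prod>j\<in>J. 1 + x j) \<le> exp (sum x J)" .
qed

lemma binomial_sum_exp_eq_cosh_power:
  fixes v :: real
  shows "(\<Sum>\<nu>\<le>k. real (k choose \<nu>) * exp (v * (real k - 2 * real \<nu>))) = (2 * cosh v) ^ k"
proof -
  have "exp (v * (real k - 2 * real \<nu>)) = exp (-v) ^ \<nu> * exp v ^ (k - \<nu>)" if "\<nu> \<le> k" for \<nu>
    using that by (simp add: exp_of_nat_mult[symmetric] exp_add[symmetric] algebra_simps)
  then have "(\<Sum>\<nu>\<le>k. real (k choose \<nu>) * exp (v * (real k - 2 * real \<nu>))) = (exp (-v) + exp v) ^ k"
    by (simp add: binomial_ring mult.assoc)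
  also have "exp (-v) + exp v = 2 * cosh v" by (simp add: cosh_field_def)
  finally show ?thesis .
qed

lemma prod_shifted_ratios_between_exp:
  fixes f :: real and k \<nu> :: nat
  assumes f_pos: "f > 0" and k_small: "2 * real k \<le> f" and "\<nu> \<le> k"
  defines "v \<equiv> real (k - 1) / (2 * f)" and "E \<equiv> 2 * real k ^ 3 / f ^ 2"
  shows "exp (v * (real k - 2 * real \<nu>) - E) \<le> (\<Prod>j=1..k-1. 1 + (real j - real \<nu>) / f)"
    and "(\<Prod>j=1..k-1. 1 + (real j - real \<nu>) / f) \<le> exp (v * (real k - 2 * real \<nu>))"
proof -
  define x where "x j = (real j - real \<nu>) / f" for j :: nat
  have x_le: "\<bar>x j\<bar> \<le> real k / f" if "j \<in> {1..k-1}" for j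
    using that \<open>\<nu> \<le> k\<close> f_pos by (auto simp: x_def abs_div divide_right_mono)
  have x_small: "\<bar>x j\<bar> \<le> 1/2" if "j \<in> {1..k-1}" for j
  proof -
    have "real k / f \<le> 1/2" using f_pos k_small by (simp add: divide_le_eq)
    with x_le[OF that] show ?thesis by linarith
  qed
  have sum_x: "(\<Sum>j=1..k-1. x j) = v * (real k - 2 * real \<nu>)"
  proof -
    have "2 * (\<Sum>j=1..k-1. real j) = real (k - 1) * real k"
      using double_gauss_sum_from_Suc_0[of "k - 1", where 'a=real] by (cases k) auto
    then show ?thesis
      using f_pos by (simp add: x_def v_def sum_subtractf field_simps flip: sum_divide_distrib)
  qed
  have "(\<Sum>j=1..k-1. x j ^ 2) \<le> (\<Sum>j=1..k-1. (real k / f) ^ 2)"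
  proof (rule sum_mono)
    fix j assume "j \<in> {1..k-1}"
    then have "\<bar>x j\<bar> \<le> \<bar>real k / f\<bar>" using x_le f_pos by simp
    then show "x j ^ 2 \<le> (real k / f) ^ 2" by (simp only: abs_le_square_iff)
  qed
  also have "\<dots> \<le> real k * (real k / f) ^ 2" by (simp add: mult_right_mono)
  finally have "2 * (\<Sum>j=1..k-1. x j ^ 2) \<le> E"
    by (simp add: E_def power2_eq_square power3_eq_cube)
  then have "exp (v * (real k - 2 * real \<nu>) - E) \<le> exp (sum x {1..k-1} - 2 * (\<Sum>j=1..k-1. x j ^ 2))"
    using sum_x by simp
  also have "\<dots> \<le> (\<Prod>j=1..k-1. 1 + x j)"
    by (intro prod_one_plus_between_exp(1) x_small) auto
  finally show "exp (v * (real k - 2 * real \<nu>) - E) \<le> (\<Prod>j=1..k-1. 1 + (real j - real \<nu>) / f)"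
    by (simp add: x_def)
  have "(\<Prod>j=1..k-1. 1 + x j) \<le> exp (v * (real k - 2 * real \<nu>))"
    unfolding sum_x[symmetric] by (intro prod_one_plus_between_exp(2) x_small) auto
  then show "(\<Prod>j=1..k-1. 1 + (real j - real \<nu>) / f) \<le> exp (v * (real k - 2 * real \<nu>))"
    by (simp add: x_def)
qed

lemma binomial_average_prod_between_exp:
  fixes f :: real and k :: nat
  assumes f_pos: "f > 0" and k_small: "2 * real k \<le> f"
  defines "E \<equiv> 2 * real k ^ 3 / f ^ 2"
  shows "exp (- E) \<le> (\<Sum>\<nu>\<le>k. real (k choose \<nu>) / 2 ^ k * (\<Prod>j=1..k-1. 1 + (real j - real \<nu>) / f))"
    and "(\<Sum>\<nu>\<le>k. real (k choose \<nu>) / 2 ^ k * (\<Prod>j=1..k-1. 1 + (real j - real \<nu>) / f)) \<le> exp E"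
proof -
  let ?S = "(\<Sum>\<nu>\<le>k. real (k choose \<nu>) / 2 ^ k * (\<Prod>j=1..k-1. 1 + (real j - real \<nu>) / f))"
  define v where "v = real (k - 1) / (2 * f)"
  define w where "w \<nu> = real (k choose \<nu>) / 2 ^ k" for \<nu>
  note prod_bounds = prod_shifted_ratios_between_exp[OF f_pos k_small, folded v_def E_def]
  have mean: "(\<Sum>\<nu>\<le>k. w \<nu> * exp (v * (real k - 2 * real \<nu>))) = cosh v ^ k"
    using binomial_sum_exp_eq_cosh_power[of k v]
    by (simp add: w_def sum_divide_distrib[symmetric] power_mult_distrib)
  have v_bounds: "0 \<le> v" "v \<le> 1" "v \<le> real k / (2 * f)"
    using f_pos k_small by (auto simp: v_def field_simps)
  have "cosh v ^ k \<le> exp (v^2) ^ k"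
    using cosh_le_exp_square[OF v_bounds(1,2)] by (intro power_mono) auto
  also have "\<dots> = exp (real k * v^2)" by (simp add: exp_of_nat_mult)
  also have "\<dots> \<le> exp E"
  proof -
    have "real k * v^2 \<le> real k * (real k / (2 * f))^2"
      using v_bounds by (intro mult_left_mono power_mono) auto
    also have "\<dots> \<le> E" using f_pos by (simp add: E_def power2_eq_square power3_eq_cube field_simps)
    finally show ?thesis by simp
  qed
  finally have cosh_upper: "cosh v ^ k \<le> exp E" .
  have "?S \<le> (\<Sum>\<nu>\<le>k. w \<nu> * exp (v * (real k - 2 * real \<nu>)))"
    unfolding w_def by (intro sum_mono mult_left_mono prod_bounds(2)) auto
  with mean cosh_upper show "?S \<le> exp E" by simp
  have "exp (- E) \<le> exp (- E) * cosh v ^ k"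
    using cosh_real_ge_1[of v] by simp
  also have "\<dots> = (\<Sum>\<nu>\<le>k. w \<nu> * exp (v * (real k - 2 * real \<nu>) - E))"
    by (simp add: mean[symmetric] sum_distrib_left exp_diff exp_minus exp_add field_simps)
  also have "\<dots> \<le> ?S"
    unfolding w_def by (intro sum_mono mult_left_mono prod_bounds(1)) auto
  finally show "exp (- E) \<le> ?S" .
qed

lemma K_ai_eq_binomial_average:
  assumes "f_ai a i \<noteq> 0"
  shows "K_ai a i k =
    (\<Sum>\<nu>\<le>k. real (k choose \<nu>) / 2 ^ k * (\<Prod>j=1..k-1. 1 + (real j - real \<nu>) / f_ai a i))"
proof (cases "k = 0")
  case False
  have prod_eq: "(\<Prod>j=1..k-1. f_ai a i - real \<nu> + real j) / f_ai a i ^ (k - 1)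
      = (\<Prod>j=1..k-1. 1 + (real j - real \<nu>) / f_ai a i)" for \<nu>
  proof -
    have "(\<Prod>j=1..k-1. f_ai a i - real \<nu> + real j) / f_ai a i ^ (k - 1)
        = (\<Prod>j=1..k-1. (f_ai a i - real \<nu> + real j) / f_ai a i)"
      by (simp add: prod_dividef)
    also have "\<dots> = (\<Prod>j=1..k-1. 1 + (real j - real \<nu>) / f_ai a i)"
      using assms by (intro prod.cong) (auto simp: field_simps)
    finally show ?thesis .
  qed
  have "1 / 2 ^ k * real (k choose \<nu>) * (\<Prod>j=1..k-1. f_ai a i - real \<nu> + real j) / f_ai a i ^ (k - 1)
      = real (k choose \<nu>) / 2 ^ k * (\<Prod>j=1..k-1. 1 + (real j - real \<nu>) / f_ai a i)" for \<nu>
    unfolding prod_eq[symmetric] by simp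
  with False show ?thesis by (simp add: K_ai_def atLeast0AtMost)
qed (simp add: K_ai_def)

lemma f_ai_lower_bound:
  assumes "c1 \<ge> 0" "a \<ge> 1" "i \<ge> 1"
    and "exp (- c1 * (2 * real a) powr (- 2 * real i / 3)) \<le> g_ai a i"
  shows "(2 * real a) ^ i / (2 * real i * exp c1) \<le> f_ai a i"
proof -
  have "(2 * real a) powr (- 2 * real i / 3) \<le> 1"
    using assms(2,3) by (intro less_imp_le powr_less_one) auto
  then have "- c1 \<le> - c1 * (2 * real a) powr (- 2 * real i / 3)"
    using assms(1) by (simp add: mult_left_le)
  then have "exp (- c1) \<le> g_ai a i"
    using assms(4) by (meson exp_le_cancel_iff order_trans)
  then have "(2 * real a) ^ i / (2 * real i * exp c1) \<le> g_ai a i * (2 * real a) ^ i / (2 * real i)"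
    using assms(2,3) by (simp add: exp_minus field_simps)
  also have "\<dots> = f_ai a i"
    using assms(2,3) by (simp add: g_ai_def)
  finally show ?thesis .
qed

lemma is_partition_mult_part_le:
  assumes "is_partition_mult n m"
  shows "i * m i \<le> n"
proof (cases "1 \<le> i \<and> i \<le> n")
  case True
  then have "i * m i \<le> (\<Sum>j=1..n. j * m j)" by (intro member_le_sum) auto
  with assms show ?thesis by (simp add: is_partition_mult_def)
next
  case False
  then have "i = 0 \<or> i > n" by auto
  with assms show ?thesis by (auto simp: is_partition_mult_def)
qed

lemma prod_between_exp_sum:
  fixes x e :: "'a \<Rightarrow> real"
  assumes "finite I" and "\<And>i. i \<in> I \<Longrightarrow> exp (- e i) \<le> x i \<and> x i \<le> exp (e i)"
  shows "exp (- sum e I) \<le> prod x I \<and> prod x I \<le> exp (sum e I)"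
proof
  have "exp (- sum e I) = (\<Prod>i\<in>I. exp (- e i))"
    using assms(1) by (simp add: exp_sum[symmetric] sum_negf)
  also have "\<dots> \<le> prod x I" using assms(2) by (intro prod_mono) auto
  finally show "exp (- sum e I) \<le> prod x I" .
  have "prod x I \<le> (\<Prod>i\<in>I. exp (e i))"
    using assms(2) by (intro prod_mono) (auto intro: order_trans[OF exp_ge_zero])
  also have "\<dots> = exp (sum e I)" using assms(1) by (simp add: exp_sum)
  finally show "prod x I \<le> exp (sum e I)" .
qed

lemma f_ai_large_for_part:
  assumes "c1 \<ge> 0" "a \<ge> 1" "i \<ge> 2"
    and g_lower: "exp (- c1 * (2 * real a) powr (- 2 * real i / 3)) \<le> g_ai a i"
    and part: "i * k \<le> n"
  shows "f_ai a i > 0" and "real k / f_ai a i \<le> exp c1 * real n / (2 * real a ^ 2)"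
proof -
  define C where "C = exp c1"
  have C_ge_1: "C \<ge> 1" using assms(1) by (simp add: C_def)
  have a_pos: "real a > 0" using assms(2) by simp
  have f_lower: "2 * real a ^ 2 / (real i * C) \<le> f_ai a i"
  proof -
    have "(2 * real a) ^ 2 \<le> (2 * real a) ^ i"
      using assms(2,3) by (intro power_increasing) auto
    then have "2 * real a ^ 2 / (real i * C) \<le> (2 * real a) ^ i / (2 * real i * C)"
      using assms(3) C_ge_1 by (simp add: field_simps power2_eq_square)
    also have "\<dots> \<le> f_ai a i"
      unfolding C_def using assms(1-3) g_lower by (intro f_ai_lower_bound) auto
    finally show ?thesis .
  qed
  have "0 < 2 * real a ^ 2 / (real i * C)" using a_pos assms(3) C_ge_1 by simp
  with f_lower show f_pos: "f_ai a i > 0" by linarith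
  have "real k / f_ai a i \<le> real k / (2 * real a ^ 2 / (real i * C))"
    using f_lower f_pos a_pos assms(3) C_ge_1 by (intro divide_left_mono) auto
  also have "\<dots> = C * (real i * real k) / (2 * real a ^ 2)" by simp
  also have "\<dots> \<le> C * real n / (2 * real a ^ 2)"
    using part C_ge_1 by (intro divide_right_mono mult_left_mono) (auto simp flip: of_nat_mult)
  finally show "real k / f_ai a i \<le> exp c1 * real n / (2 * real a ^ 2)" by (simp add: C_def)
qed

lemma K_ai_bound_for_part:
  assumes "c1 \<ge> 0" "a \<ge> 1" "i \<ge> 2"
    and g_lower: "exp (- c1 * (2 * real a) powr (- 2 * real i / 3)) \<le> g_ai a i"
    and part: "i * k \<le> n" and a_large: "exp c1 * real n \<le> real a"
  defines "e \<equiv> exp c1 ^ 2 * real n / real a ^ 2"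
  shows "exp (- e) \<le> K_ai a i k \<and> K_ai a i k \<le> exp e"
proof -
  define C where "C = exp c1"
  define f where "f = f_ai a i"
  define t where "t = C * real n / (2 * real a ^ 2)"
  have f_pos: "f > 0" and ratio: "real k / f \<le> t"
    unfolding f_def t_def C_def using f_ai_large_for_part[OF assms(1-3) g_lower part] by auto
  have a_pos: "real a > 0" using assms(2) by simp
  have n_le_a: "real n \<le> real a"
    using a_large assms(1) mult_right_mono[of 1 "exp c1" "real n"] by simp
  have "real a * 1 \<le> real a * real a" using assms(2) by (intro mult_left_mono) auto
  with a_large have "C * real n \<le> real a ^ 2" by (simp add: C_def power2_eq_square)
  then have "t \<le> 1/2" using a_pos by (simp add: t_def field_simps)
  with ratio have "real k / f \<le> 1/2" by linarith
  then have k_small: "2 * real k \<le> f" using f_pos by (simp add: divide_le_eq)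
  have "real k \<le> real n" using part assms(3) by (simp add: le_trans[OF _ part])
  then have "2 * real k ^ 3 / f ^ 2 = 2 * real k * (real k / f) ^ 2"
    by (simp add: power2_eq_square power3_eq_cube)
  also have "\<dots> \<le> 2 * real n * t ^ 2"
    using ratio f_pos \<open>real k \<le> real n\<close> by (intro mult_mono power_mono) auto
  also have "\<dots> = e * (real n / real a) ^ 2 / 2"
    using a_pos by (simp add: e_def t_def C_def field_simps power2_eq_square)
  also have "\<dots> \<le> e"
  proof -
    have "(real n / real a) ^ 2 \<le> 1" using n_le_a a_pos by (simp add: power_le_one)
    then show ?thesis using mult_left_le[of "(real n / real a) ^ 2 / 2" e] by (simp add: e_def)
  qed
  finally have "2 * real k ^ 3 / f ^ 2 \<le> e" .
  moreover have "exp (- (2 * real k ^ 3 / f ^ 2)) \<le> K_ai a i k \<and> K_ai a i k \<le> exp (2 * real k ^ 3 / f ^ 2)"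
    using binomial_average_prod_between_exp[OF f_pos k_small] K_ai_eq_binomial_average[of a i k] f_pos
    by (simp add: f_def)
  ultimately show ?thesis by (meson exp_le_cancel_iff neg_le_iff_le order_trans)
qed

theorem lemma3p4:
  fixes c1 :: real
  assumes c1_pos: "c1 > 0"
    and c1_bound: "\<forall>a i. a \<ge> 1 \<longrightarrow> i \<ge> 1 \<longrightarrow>
         exp (- c1 * (2 * real a) powr (- 2 * real i / 3)) \<le> g_ai a i \<and>
         g_ai a i \<le> exp (c1 * (2 * real a) powr (- 2 * real i / 3))"
  shows "\<exists>c4>0. \<forall>s \<delta> (n::nat) (m::nat \<Rightarrow> nat) (a::nat).
     s > 0 \<longrightarrow> 0 < \<delta> \<longrightarrow> \<delta> < delta0 c1 s \<longrightarrow> n \<ge> 1 \<longrightarrow>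
     is_partition_mult n m \<longrightarrow>
     real a \<ge> \<delta> * real n powr (5/4) \<longrightarrow> \<delta> * real n powr (5/4) \<ge> exp c1 * real n \<longrightarrow>
     exp (- c4 * real n ^ 2 / real a ^ 2) \<le> (\<Prod>i=2..n. K_ai a i (m i)) \<and>
     (\<Prod>i=2..n. K_ai a i (m i)) \<le> exp (c4 * real n ^ 2 / real a ^ 2)"
proof (intro exI[of _ "exp c1 ^ 2"] conjI allI impI)
  fix s \<delta> :: real and n :: nat and m :: "nat \<Rightarrow> nat" and a :: nat
  assume "n \<ge> 1" and part: "is_partition_mult n m"
    and "real a \<ge> \<delta> * real n powr (5/4)" and "\<delta> * real n powr (5/4) \<ge> exp c1 * real n"
  then have a_large: "exp c1 * real n \<le> real a" by linarith
  have n_le_a: "real n \<le> real a"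
    using a_large c1_pos mult_right_mono[of 1 "exp c1" "real n"] by simp
  with \<open>n \<ge> 1\<close> have "a \<ge> 1" by simp
  define e where "e = exp c1 ^ 2 * real n / real a ^ 2"
  have "exp (- e) \<le> K_ai a i (m i) \<and> K_ai a i (m i) \<le> exp e" if "i \<in> {2..n}" for i
    unfolding e_def using that c1_pos \<open>a \<ge> 1\<close> conjunct1[OF c1_bound[rule_format, of a i]]
    by (intro K_ai_bound_for_part is_partition_mult_part_le[OF part] a_large) auto
  then have prod_bounds: "exp (- sum (\<lambda>_. e) {2..n}) \<le> (\<Prod>i=2..n. K_ai a i (m i))
      \<and> (\<Prod>i=2..n. K_ai a i (m i)) \<le> exp (sum (\<lambda>_. e) {2..n})"
    by (intro prod_between_exp_sum) auto
  have "sum (\<lambda>_. e) {2..n} = real (n - 1) * e" by simp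
  also have "\<dots> \<le> real n * e" by (intro mult_right_mono) (auto simp: e_def)
  also have "\<dots> = exp c1 ^ 2 * real n ^ 2 / real a ^ 2" by (simp add: e_def power2_eq_square)
  finally have sum_e: "sum (\<lambda>_. e) {2..n} \<le> exp c1 ^ 2 * real n ^ 2 / real a ^ 2" .
  show "exp (- (exp c1 ^ 2) * real n ^ 2 / real a ^ 2) \<le> (\<Prod>i=2..n. K_ai a i (m i))"
    by (rule order_trans[OF _ conjunct1[OF prod_bounds]]) (use sum_e in simp)
  show "(\<Prod>i=2..n. K_ai a i (m i)) \<le> exp (exp c1 ^ 2 * real n ^ 2 / real a ^ 2)"
    by (rule order_trans[OF conjunct2[OF prod_bounds]]) (use sum_e in simp)
qed simp

end
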